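(* Let $\Gamma$ be a countably infinite residually finite group and $\{\Gamma_n\}_{n\in\mathbb N}$ a strictly decreasing sequence of finite-index normal subgroups with $\bigcap_n\Gamma_n=\{e_\Gamma\}$. Let $X=\varprojlim\Gamma/\Gamma_n$ with left translation action of $\Gamma\subseteq X$ and quotient maps $\pi_n:X\to\Gamma/\Gamma_n$. For each $n\ge2$ pick $\gamma_n\in\Gamma_{n-1}\setminus\Gamma_n$ and set $C_n=\pi_n^{-1}(\gamma_n\Gamma_n)$. Put $X_+=\bigcup_{n\ge2}C_n$ and $X_-=X\setminus(X_+\cup\{e_\Gamma\})$. Then every independence set $M\subseteq\Gamma$ for $(X_+,X_-)$ has cardinality at most $5$.
   Context: $X=\varprojlim\Gamma/\Gamma_n$ is the set of $(x_n)\in\prod_n\Gamma/\Gamma_n$ compatible under the natural maps $\Gamma/\Gamma_{n+1}\to\Gamma/\Gamma_n$, a compact metrizable group containing $\Gamma$ as a dense subgroup. A set $M\subseteq\Gamma$ is an independence set for $(A_1,A_2)$ if $\bigcap_{s\in F}s^{-1}A_{\omega(s)}\ne\emptyset$ for every nonempty finite $F\subseteq M$ and every $\omega\in\{1,2\}^F$. *)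

theory Defs
  imports "HOL-Algebra.Coset" "HOL-Library.Countable_Set"
begin

definition residually_finite :: "('a, 'b) monoid_scheme \<Rightarrow> bool" where
  "residually_finite G \<longleftrightarrow>
     (\<forall>g\<in>carrier G. g \<noteq> \<one>\<^bsub>G\<^esub> \<longrightarrow>
        (\<exists>N. N \<lhd> G \<and> finite (rcosets\<^bsub>G\<^esub> N) \<and> g \<notin> N))"

text \<open>A point is a compatible sequence of
  cosets x n \<in> G/Gamma_n; compatibility under Gamma/Gamma_{n+1} \<rightarrow> Gamma/Gamma_n
  means x (n+1) \<subseteq> x n.  The unused index 0 is normalised to the whole carrier.\<close>
definition invlim :: "('a, 'b) monoid_scheme \<Rightarrow> (nat \<Rightarrow> 'a set) \<Rightarrow> (nat \<Rightarrow> 'a set) set" where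
  "invlim G \<Gamma> = {x. x 0 = carrier G \<and>
      (\<forall>n\<ge>1. x n \<in> rcosets\<^bsub>G\<^esub> (\<Gamma> n) \<and> x (Suc n) \<subseteq> x n)}"

definition embed :: "('a, 'b) monoid_scheme \<Rightarrow> (nat \<Rightarrow> 'a set) \<Rightarrow> 'a \<Rightarrow> nat \<Rightarrow> 'a set" where
  "embed G \<Gamma> g = (\<lambda>n. if n = 0 then carrier G else g <#\<^bsub>G\<^esub> \<Gamma> n)"

definition act :: "('a, 'b) monoid_scheme \<Rightarrow> 'a \<Rightarrow> (nat \<Rightarrow> 'a set) \<Rightarrow> nat \<Rightarrow> 'a set" where
  "act G s x = (\<lambda>n. s <#\<^bsub>G\<^esub> x n)"

definition Xplus :: "('a, 'b) monoid_scheme \<Rightarrow> (nat \<Rightarrow> 'a set) \<Rightarrow> (nat \<Rightarrow> 'a) \<Rightarrow> (nat \<Rightarrow> 'a set) set" where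
  "Xplus G \<Gamma> \<gamma> = (\<Union>n\<in>{2..}. {x \<in> invlim G \<Gamma>. x n = \<gamma> n <#\<^bsub>G\<^esub> \<Gamma> n})"

definition Xminus :: "('a, 'b) monoid_scheme \<Rightarrow> (nat \<Rightarrow> 'a set) \<Rightarrow> (nat \<Rightarrow> 'a) \<Rightarrow> (nat \<Rightarrow> 'a set) set" where
  "Xminus G \<Gamma> \<gamma> = invlim G \<Gamma> - (Xplus G \<Gamma> \<gamma> \<union> {embed G \<Gamma> \<one>\<^bsub>G\<^esub>})"

text \<open>Independence set for a pair (A1, A2) of subsets of X under an action;
  omega \<in> {1,2}^F is encoded as a boolean-valued function (True = 1, False = 2).\<close>
definition indep_set :: "'x set \<Rightarrow> ('g \<Rightarrow> 'x \<Rightarrow> 'x) \<Rightarrow> 'x set \<Rightarrow> 'x set \<Rightarrow> 'g set \<Rightarrow> bool" where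
  "indep_set X T A1 A2 M \<longleftrightarrow>
     (\<forall>F (\<omega> :: 'g \<Rightarrow> bool). F \<subseteq> M \<longrightarrow> F \<noteq> {} \<longrightarrow> finite F \<longrightarrow>
        (\<Inter>s\<in>F. {x \<in> X. T s x \<in> (if \<omega> s then A1 else A2)}) \<noteq> {})"

end

(*
  The points of X are the ends of the rooted tree of cosets g \<Gamma>_n, and for a = s^-1 the
  translate s^-1 X_+ = a X_+ consists of the ends that leave the path of a at some level
  n \<ge> 2 into the coset a \<gamma>_n \<Gamma>_n, a sibling of a \<Gamma>_n because \<gamma>_n \<in> \<Gamma>_(n-1).

  Suppose four elements have all sign patterns realised, and let m be the last level at
  which their cosets all coincide. If two of them, a and a', still agree at level m+1 while
  a third one b splits off there, an end in a X_+ but not in a' X_+ must follow the path of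
  a through level m+1; whether it lies in b X_+ is then decided by its (common) coset at
  level m+1, so not both sign patterns for b occur. Otherwise three of them split pairwise
  at level m+1, and an end in their three translates but not in that of the fourth would
  have to pass at level m+1 through a \<Gamma>_(m+1) or a \<gamma>_(m+1) \<Gamma>_(m+1) for each of the three
  elements a, which is impossible. So independence sets have at most three elements; the
  countability, infinity and residual finiteness of the group and the finiteness of the
  indices are not needed.
*)

theory Submission
  imports Defs
begin

text \<open>The translate \<open>a X\<^sub>+\<close>, described level-wise; it equals \<open>s\<^sup>-\<^sup>1 X\<^sub>+\<close> for \<open>a = s\<^sup>-\<^sup>1\<close>.\<close>

definition translated_Xplus ::
    "('a, 'b) monoid_scheme \<Rightarrow> (nat \<Rightarrow> 'a set) \<Rightarrow> (nat \<Rightarrow> 'a) \<Rightarrow> 'a \<Rightarrow> (nat \<Rightarrow> 'a set) set" where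
  "translated_Xplus G \<Gamma> \<gamma> a = {x \<in> invlim G \<Gamma>. \<exists>n\<ge>2. x n = \<Gamma> n #>\<^bsub>G\<^esub> (a \<otimes>\<^bsub>G\<^esub> \<gamma> n)}"

definition independent_translates ::
    "('a, 'b) monoid_scheme \<Rightarrow> (nat \<Rightarrow> 'a set) \<Rightarrow> (nat \<Rightarrow> 'a) \<Rightarrow> 'a set \<Rightarrow> bool" where
  "independent_translates G \<Gamma> \<gamma> A \<longleftrightarrow>
     (\<forall>\<omega>. \<exists>x\<in>invlim G \<Gamma>. \<forall>a\<in>A. x \<in> translated_Xplus G \<Gamma> \<gamma> a \<longleftrightarrow> \<omega> a)"

lemma independent_translatesD:
  "independent_translates G \<Gamma> \<gamma> A \<Longrightarrow>
    \<exists>x\<in>invlim G \<Gamma>. \<forall>a\<in>A. x \<in> translated_Xplus G \<Gamma> \<gamma> a \<longleftrightarrow> \<omega> a"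
  by (simp add: independent_translates_def)

lemma last_level_before_failure:
  fixes P :: "nat \<Rightarrow> bool"
  assumes "P 1" "1 \<le> N" "\<not> P N"
  obtains m where "1 \<le> m" "P m" "\<not> P (Suc m)"
proof -
  have "\<exists>m\<ge>1. P m \<and> \<not> P (Suc m)"
  proof (rule ccontr)
    assume no_step: "\<not> ?thesis"
    have "P n" if "1 \<le> n" for n
      using that by (induction n rule: dec_induct) (use assms(1) no_step in auto)
    then show False using assms(2,3) by blast
  qed
  then show ?thesis using that by blast
qed

locale coset_tower = group G for G (structure) +
  fixes \<Gamma> :: "nat \<Rightarrow> 'a set" and \<gamma> :: "nat \<Rightarrow> 'a"
  assumes normal_level: "1 \<le> n \<Longrightarrow> \<Gamma> n \<lhd> G"
    and level_Suc_subset: "1 \<le> n \<Longrightarrow> \<Gamma> (Suc n) \<subseteq> \<Gamma> n"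
    and Inter_levels: "(\<Inter>n\<in>{1..}. \<Gamma> n) = {\<one>}"
    and gamma_mem: "2 \<le> n \<Longrightarrow> \<gamma> n \<in> \<Gamma> (n - 1) - \<Gamma> n"
begin

abbreviation "X \<equiv> invlim G \<Gamma>"
abbreviation "aXplus a \<equiv> translated_Xplus G \<Gamma> \<gamma> a"

lemma subgroup_level: "1 \<le> n \<Longrightarrow> subgroup (\<Gamma> n) G"
  using normal_level normal_imp_subgroup by blast

lemma level_subset_carrier: "1 \<le> n \<Longrightarrow> \<Gamma> n \<subseteq> carrier G"
  using subgroup_level subgroup.subset by blast

lemma level_antimono:
  assumes "1 \<le> k" "k \<le> n"
  shows "\<Gamma> n \<subseteq> \<Gamma> k"
  using assms(2)
proof (induction n rule: dec_induct)
  case (step n)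
  then show ?case using level_Suc_subset[of n] assms(1) by simp
qed simp

lemma gamma_carrier: "2 \<le> n \<Longrightarrow> \<gamma> n \<in> carrier G"
  using gamma_mem level_subset_carrier[of "n - 1"] by fastforce

lemma level_rcos_eq_iff:
  assumes "1 \<le> n" "a \<in> carrier G" "b \<in> carrier G"
  shows "\<Gamma> n #> a = \<Gamma> n #> b \<longleftrightarrow> a \<otimes> inv b \<in> \<Gamma> n"
  using subgroup.rcos_module[OF subgroup_level[OF assms(1)] is_group assms(3,2)]
    rcos_self[OF _ subgroup_level] repr_independence[OF _ _ subgroup_level] assms
  by blast

lemma level_rcos_eq_mono:
  assumes "1 \<le> k" "k \<le> n" "a \<in> carrier G" "b \<in> carrier G" "\<Gamma> n #> a = \<Gamma> n #> b"
  shows "\<Gamma> k #> a = \<Gamma> k #> b"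
  using assms level_antimono[OF assms(1,2)] by (auto simp: level_rcos_eq_iff)

lemma level_rcos_mult_right_eq_iff:
  assumes "1 \<le> n" "a \<in> carrier G" "b \<in> carrier G" "g \<in> carrier G"
  shows "\<Gamma> n #> (a \<otimes> g) = \<Gamma> n #> (b \<otimes> g) \<longleftrightarrow> \<Gamma> n #> a = \<Gamma> n #> b"
proof -
  have "(a \<otimes> g) \<otimes> inv (b \<otimes> g) = a \<otimes> inv b"
    using assms by (simp add: inv_mult_group m_assoc[symmetric]) (simp add: m_assoc)
  then show ?thesis using assms by (simp add: level_rcos_eq_iff)
qed

lemma level_rcos_mult_gamma_below:
  assumes "2 \<le> n" "1 \<le> k" "k < n" "a \<in> carrier G"
  shows "\<Gamma> k #> (a \<otimes> \<gamma> n) = \<Gamma> k #> a"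
proof -
  have "\<Gamma> (n - 1) \<subseteq> \<Gamma> k"
    using level_antimono assms by simp
  then have "\<gamma> n \<in> \<Gamma> k"
    using gamma_mem[OF assms(1)] by blast
  then have "a \<otimes> \<gamma> n \<otimes> inv a \<in> \<Gamma> k"
    using normal.inv_op_closed2[OF normal_level[OF assms(2)] assms(4)] by blast
  then show ?thesis using assms gamma_carrier by (simp add: level_rcos_eq_iff)
qed

lemma level_rcos_mult_gamma_neq:
  assumes "2 \<le> n" "a \<in> carrier G"
  shows "\<Gamma> n #> (a \<otimes> \<gamma> n) \<noteq> \<Gamma> n #> a"
proof
  assume "\<Gamma> n #> (a \<otimes> \<gamma> n) = \<Gamma> n #> a"
  then have "a \<otimes> \<gamma> n \<otimes> inv a \<in> \<Gamma> n"
    using assms gamma_carrier by (simp add: level_rcos_eq_iff)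
  then have "inv a \<otimes> (a \<otimes> \<gamma> n \<otimes> inv a) \<otimes> a \<in> \<Gamma> n"
    using normal.inv_op_closed1[OF normal_level] assms by simp
  moreover have "inv a \<otimes> (a \<otimes> \<gamma> n \<otimes> inv a) \<otimes> a = \<gamma> n"
    using assms gamma_carrier by (simp add: m_assoc) (simp add: m_assoc[symmetric])
  ultimately show False using gamma_mem[OF assms(1)] by simp
qed

lemma levels_separate:
  assumes "a \<in> carrier G" "b \<in> carrier G" "a \<noteq> b"
  obtains N where "1 \<le> N" "\<Gamma> N #> a \<noteq> \<Gamma> N #> b"
proof -
  have "a \<otimes> inv b \<noteq> \<one>"
    using inv_equality[of a "inv b"] assms by auto
  then obtain N where "1 \<le> N" "a \<otimes> inv b \<notin> \<Gamma> N"
    using Inter_levels by auto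
  then show ?thesis using that assms by (simp add: level_rcos_eq_iff)
qed

lemma level_lcos_eq_rcos: "1 \<le> n \<Longrightarrow> s \<in> carrier G \<Longrightarrow> s <# \<Gamma> n = \<Gamma> n #> s"
  using normal.coset_eq[OF normal_level] by auto

lemma lcos_level_rcos:
  assumes "1 \<le> n" "s \<in> carrier G" "g \<in> carrier G"
  shows "s <# (\<Gamma> n #> g) = \<Gamma> n #> (s \<otimes> g)"
  using assms level_subset_carrier
  by (simp add: level_lcos_eq_rcos[symmetric] lcos_m_assoc)

lemma invlim_level_rcos: "x \<in> X \<Longrightarrow> 1 \<le> n \<Longrightarrow> \<exists>g\<in>carrier G. x n = \<Gamma> n #> g"
  unfolding invlim_def RCOSETS_def by auto

lemma invlim_antimono:
  assumes "x \<in> X" "1 \<le> k" "k \<le> n"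
  shows "x n \<subseteq> x k"
  using assms(3)
proof (induction n rule: dec_induct)
  case (step m)
  then have "1 \<le> m" using assms(2) by simp
  then have "x (Suc m) \<subseteq> x m" using assms(1) by (simp add: invlim_def)
  then show ?case using step.IH by blast
qed simp

lemma invlim_level_down:
  assumes "x \<in> X" "1 \<le> k" "k \<le> n" "g \<in> carrier G" "x n = \<Gamma> n #> g"
  shows "x k = \<Gamma> k #> g"
proof -
  obtain h where h: "h \<in> carrier G" "x k = \<Gamma> k #> h"
    using invlim_level_rcos assms by blast
  have "g \<in> x k"
    using invlim_antimono[OF assms(1-3)] rcos_self[OF assms(4) subgroup_level] assms by auto
  then show ?thesis
    using repr_independence[OF _ h(1) subgroup_level[OF assms(2)]] h by simp
qed

lemma translated_XplusE:
  assumes "x \<in> aXplus a"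
  obtains n where "x \<in> X" "2 \<le> n" "x n = \<Gamma> n #> (a \<otimes> \<gamma> n)"
  using assms unfolding translated_Xplus_def by blast

lemma branch_level_below:
  assumes "x \<in> X" "2 \<le> n" "x n = \<Gamma> n #> (a \<otimes> \<gamma> n)" "a \<in> carrier G" "1 \<le> k" "k < n"
  shows "x k = \<Gamma> k #> a"
  using invlim_level_down[OF assms(1,5) _ _ assms(3)] level_rcos_mult_gamma_below[OF assms(2,5,6,4)]
    assms gamma_carrier by simp

lemma branch_level_above:
  assumes "x \<in> X" "2 \<le> n" "x n = \<Gamma> n #> (a \<otimes> \<gamma> n)" "a \<in> carrier G" "n \<le> k"
  shows "x k \<noteq> \<Gamma> k #> a"
proof
  assume "x k = \<Gamma> k #> a"
  then have "x n = \<Gamma> n #> a"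
    using invlim_level_down[OF assms(1) _ assms(5,4)] assms(2) by simp
  then show False using level_rcos_mult_gamma_neq[OF assms(2,4)] assms(3) by simp
qed

lemma translated_Xplus_transfer:
  assumes "x \<in> X" "2 \<le> n" "x n = \<Gamma> n #> (a \<otimes> \<gamma> n)" "a \<in> carrier G" "b \<in> carrier G"
    "\<Gamma> n #> a = \<Gamma> n #> b"
  shows "x \<in> aXplus b"
  using assms level_rcos_mult_right_eq_iff[of n a b "\<gamma> n"] gamma_carrier
  unfolding translated_Xplus_def by auto

lemma translated_Xplus_level_one:
  assumes "x \<in> aXplus a" "a \<in> carrier G"
  shows "x 1 = \<Gamma> 1 #> a"
proof -
  obtain n where n: "x \<in> X" "2 \<le> n" "x n = \<Gamma> n #> (a \<otimes> \<gamma> n)"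
    using assms(1) by (rule translated_XplusE)
  then show ?thesis using branch_level_below[OF n assms(2), of 1] by simp
qed

lemma separated_branch_level:
  assumes "x \<in> aXplus a" "x \<notin> aXplus b" "a \<in> carrier G" "b \<in> carrier G"
    "1 \<le> k" "\<Gamma> k #> a = \<Gamma> k #> b"
  obtains n where "x \<in> X" "2 \<le> n" "k < n" "x n = \<Gamma> n #> (a \<otimes> \<gamma> n)"
proof -
  obtain n where n: "x \<in> X" "2 \<le> n" "x n = \<Gamma> n #> (a \<otimes> \<gamma> n)"
    using assms(1) by (rule translated_XplusE)
  have "k < n"
  proof (rule ccontr)
    assume "\<not> k < n"
    then have "\<Gamma> n #> a = \<Gamma> n #> b"
      using level_rcos_eq_mono[OF _ _ assms(3,4,6), of n] n(2) by simp
    then show False using translated_Xplus_transfer[OF n assms(3,4)] assms(2) by blast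
  qed
  then show ?thesis using that n by blast
qed

lemma separated_point_on_path:
  assumes "x \<in> aXplus a" "x \<notin> aXplus b" "a \<in> carrier G" "b \<in> carrier G"
    "1 \<le> k" "\<Gamma> k #> a = \<Gamma> k #> b"
  shows "x k = \<Gamma> k #> a"
proof -
  obtain n where n: "x \<in> X" "2 \<le> n" "k < n" "x n = \<Gamma> n #> (a \<otimes> \<gamma> n)"
    using assms by (rule separated_branch_level)
  then show ?thesis using branch_level_below[OF n(1,2,4) assms(3,5) n(3)] by blast
qed

lemma split_pair_not_independent:
  assumes "independent_translates G \<Gamma> \<gamma> A" "A \<subseteq> carrier G"
    and "a \<in> A" "a' \<in> A" "b \<in> A" "a \<noteq> a'" "1 \<le> m" "\<Gamma> m #> a = \<Gamma> m #> b"
    and "\<Gamma> (Suc m) #> a = \<Gamma> (Suc m) #> a'" "\<Gamma> (Suc m) #> a \<noteq> \<Gamma> (Suc m) #> b"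
  shows False
proof -
  have carr: "a \<in> carrier G" "a' \<in> carrier G" "b \<in> carrier G" using assms(2-5) by auto
  have "b \<noteq> a" "b \<noteq> a'" using assms(9,10) by auto
  obtain x where "\<forall>c\<in>A. x \<in> aXplus c \<longleftrightarrow> c = a"
    using independent_translatesD[OF assms(1), of "\<lambda>c. c = a"] by blast
  then have x: "x \<in> aXplus a" "x \<notin> aXplus a'" "x \<notin> aXplus b"
    using assms(3-6) \<open>b \<noteq> a\<close> by auto
  obtain y where "\<forall>c\<in>A. y \<in> aXplus c \<longleftrightarrow> c = a \<or> c = b"
    using independent_translatesD[OF assms(1), of "\<lambda>c. c = a \<or> c = b"] by blast
  then have y: "y \<in> aXplus a" "y \<notin> aXplus a'" "y \<in> aXplus b"
    using assms(3-6) \<open>b \<noteq> a'\<close> by auto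
  have on_path: "z (Suc m) = \<Gamma> (Suc m) #> a" if "z \<in> aXplus a" "z \<notin> aXplus a'" for z
    using separated_point_on_path[OF that carr(1,2) _ assms(9)] by simp
  obtain n where n: "y \<in> X" "2 \<le> n" "y n = \<Gamma> n #> (b \<otimes> \<gamma> n)"
    using y(3) by (rule translated_XplusE)
  consider "n < Suc m" | "n = Suc m" | "Suc m < n" by linarith
  then show False
  proof cases
    case 1
    then have "y n = \<Gamma> n #> a"
      using invlim_level_down[OF n(1) _ _ carr(1) on_path[OF y(1,2)], of n] n(2) by simp
    moreover have "\<Gamma> n #> a = \<Gamma> n #> b"
      using level_rcos_eq_mono[OF _ _ carr(1,3) assms(8), of n] 1 n(2) by simp
    ultimately show False using branch_level_above[OF n carr(3)] by simp
  next
    case 2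
    then have "x (Suc m) = \<Gamma> (Suc m) #> (b \<otimes> \<gamma> (Suc m))"
      using n(3) on_path[OF x(1,2)] on_path[OF y(1,2)] by simp
    moreover have "x \<in> X" using x(1) unfolding translated_Xplus_def by blast
    ultimately have "x \<in> aXplus b"
      using assms(7) unfolding translated_Xplus_def by (auto intro!: exI[of _ "Suc m"])
    then show False using x(3) by blast
  next
    case 3
    then show False
      using branch_level_below[OF n carr(3)] on_path[OF y(1,2)] assms(10) by simp
  qed
qed

lemma separated_point_next_level:
  assumes "x \<in> aXplus a" "x \<notin> aXplus z" "a \<in> carrier G" "z \<in> carrier G"
    "1 \<le> m" "\<Gamma> m #> a = \<Gamma> m #> z"
  shows "x (Suc m) \<in> {\<Gamma> (Suc m) #> a, \<Gamma> (Suc m) #> (a \<otimes> \<gamma> (Suc m))}"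
proof -
  obtain n where n: "x \<in> X" "2 \<le> n" "m < n" "x n = \<Gamma> n #> (a \<otimes> \<gamma> n)"
    using assms by (rule separated_branch_level)
  then consider "n = Suc m" | "Suc m < n" by linarith
  then show ?thesis
    by cases (use n branch_level_below[OF n(1,2,4) assms(3)] in auto)
qed

lemma three_way_split_not_independent:
  assumes "independent_translates G \<Gamma> \<gamma> A" "A \<subseteq> carrier G"
    and "p \<in> A" "q \<in> A" "r \<in> A" "z \<in> A" "z \<notin> {p, q, r}" "1 \<le> m"
    and "\<Gamma> m #> p = \<Gamma> m #> z" "\<Gamma> m #> q = \<Gamma> m #> z" "\<Gamma> m #> r = \<Gamma> m #> z"
    and "\<Gamma> (Suc m) #> p \<noteq> \<Gamma> (Suc m) #> q" "\<Gamma> (Suc m) #> p \<noteq> \<Gamma> (Suc m) #> r"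
      "\<Gamma> (Suc m) #> q \<noteq> \<Gamma> (Suc m) #> r"
  shows False
proof -
  have carr: "p \<in> carrier G" "q \<in> carrier G" "r \<in> carrier G" "z \<in> carrier G"
    using assms(2-6) by auto
  obtain x where x: "\<forall>c\<in>A. x \<in> aXplus c \<longleftrightarrow> c \<noteq> z"
    using independent_translatesD[OF assms(1), of "\<lambda>c. c \<noteq> z"] by blast
  let ?C = "\<lambda>c. \<Gamma> (Suc m) #> c" and ?D = "\<lambda>c. \<Gamma> (Suc m) #> (c \<otimes> \<gamma> (Suc m))"
  have in_x: "x \<in> aXplus p" "x \<in> aXplus q" "x \<in> aXplus r" "x \<notin> aXplus z"
    using x assms(3-7) by auto
  have "x (Suc m) \<in> {?C p, ?D p}" "x (Suc m) \<in> {?C q, ?D q}" "x (Suc m) \<in> {?C r, ?D r}"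
    using separated_point_next_level[OF _ in_x(4) _ carr(4) assms(8)] in_x(1-3) carr(1-3) assms(9-11)
    by blast+
  moreover have "?D p \<noteq> ?D q" "?D p \<noteq> ?D r" "?D q \<noteq> ?D r"
    using assms(12-14) carr gamma_carrier[of "Suc m"] assms(8)
    by (simp_all add: level_rcos_mult_right_eq_iff)
  ultimately show False using assms(12-14) by auto
qed

lemma first_split_level:
  assumes "independent_translates G \<Gamma> \<gamma> A" "A \<subseteq> carrier G" "p \<in> A" "q \<in> A" "p \<noteq> q"
  obtains m where "1 \<le> m" "\<forall>c\<in>A. \<forall>d\<in>A. \<Gamma> m #> c = \<Gamma> m #> d"
    "\<not> (\<forall>c\<in>A. \<forall>d\<in>A. \<Gamma> (Suc m) #> c = \<Gamma> (Suc m) #> d)"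
proof -
  define agree where "agree k \<longleftrightarrow> (\<forall>c\<in>A. \<forall>d\<in>A. \<Gamma> k #> c = \<Gamma> k #> d)" for k
  obtain x where "\<forall>c\<in>A. x \<in> aXplus c"
    using independent_translatesD[OF assms(1), of "\<lambda>_. True"] by blast
  then have "agree 1"
    unfolding agree_def using translated_Xplus_level_one assms(2) by (metis subsetD)
  moreover obtain N where "1 \<le> N" "\<Gamma> N #> p \<noteq> \<Gamma> N #> q"
    using levels_separate assms(2-5) by blast
  then have "1 \<le> N" "\<not> agree N" using assms(3,4) unfolding agree_def by auto
  ultimately obtain m where "1 \<le> m" "agree m" "\<not> agree (Suc m)"
    by (rule last_level_before_failure)
  then show ?thesis using that unfolding agree_def by blast
qed

lemma card_4_not_independent:
  assumes "A \<subseteq> carrier G" "card A = 4"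
  shows "\<not> independent_translates G \<Gamma> \<gamma> A"
proof
  assume ind: "independent_translates G \<Gamma> \<gamma> A"
  obtain z where z: "z \<in> A" using assms(2) by fastforce
  then have "card (A - {z}) = 3" using assms(2) by simp
  then obtain p q r where pqr: "A - {z} = {p, q, r}" "p \<noteq> q" "q \<noteq> r" "p \<noteq> r"
    by (auto simp: card_3_iff)
  then have in_A: "p \<in> A" "q \<in> A" "r \<in> A" "z \<notin> {p, q, r}" by auto
  obtain m where m: "1 \<le> m" "\<forall>c\<in>A. \<forall>d\<in>A. \<Gamma> m #> c = \<Gamma> m #> d"
    "\<not> (\<forall>c\<in>A. \<forall>d\<in>A. \<Gamma> (Suc m) #> c = \<Gamma> (Suc m) #> d)"
    by (rule first_split_level[OF ind assms(1) in_A(1,2) pqr(2)])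
  show False
  proof (cases "\<exists>a\<in>A. \<exists>a'\<in>A. a \<noteq> a' \<and> \<Gamma> (Suc m) #> a = \<Gamma> (Suc m) #> a'")
    case True
    then obtain a a' where a: "a \<in> A" "a' \<in> A" "a \<noteq> a'" "\<Gamma> (Suc m) #> a = \<Gamma> (Suc m) #> a'"
      by blast
    moreover obtain b where "b \<in> A" "\<Gamma> (Suc m) #> a \<noteq> \<Gamma> (Suc m) #> b"
      using m(3) a(1,4) by metis
    ultimately show False
      using split_pair_not_independent[OF ind assms(1)] m(1,2) by blast
  next
    case False
    then have "\<Gamma> (Suc m) #> p \<noteq> \<Gamma> (Suc m) #> q" "\<Gamma> (Suc m) #> p \<noteq> \<Gamma> (Suc m) #> r"
      "\<Gamma> (Suc m) #> q \<noteq> \<Gamma> (Suc m) #> r"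
      using in_A pqr(2-4) by blast+
    then show False
      using three_way_split_not_independent[OF ind assms(1) in_A(1-3) z in_A(4) m(1)] in_A(1-3) z m(2)
      by blast
  qed
qed

lemma act_Xplus_imp_translated:
  assumes "x \<in> X" "s \<in> carrier G" "act G s x \<in> Xplus G \<Gamma> \<gamma>"
  shows "x \<in> aXplus (inv s)"
proof -
  obtain n where n: "2 \<le> n" "s <# x n = \<gamma> n <# \<Gamma> n"
    using assms(3) unfolding Xplus_def act_def by auto
  then have "1 \<le> n" by simp
  then obtain g where g: "g \<in> carrier G" "x n = \<Gamma> n #> g"
    using invlim_level_rcos assms(1) by blast
  have "\<Gamma> n #> (s \<otimes> g) = \<Gamma> n #> \<gamma> n"
    using n g \<open>1 \<le> n\<close> assms(2) gamma_carrier by (simp add: lcos_level_rcos level_lcos_eq_rcos)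
  then have "inv s <# (\<Gamma> n #> (s \<otimes> g)) = inv s <# (\<Gamma> n #> \<gamma> n)" by simp
  then have "x n = \<Gamma> n #> (inv s \<otimes> \<gamma> n)"
    using g \<open>1 \<le> n\<close> assms(2) gamma_carrier[OF n(1)]
    by (simp add: lcos_level_rcos m_assoc[symmetric])
  then show ?thesis using assms(1) n(1) unfolding translated_Xplus_def by auto
qed

lemma act_Xminus_imp_not_translated:
  assumes "x \<in> X" "s \<in> carrier G" "act G s x \<in> Xminus G \<Gamma> \<gamma>"
  shows "x \<notin> aXplus (inv s)"
proof
  assume "x \<in> aXplus (inv s)"
  then obtain n where n: "2 \<le> n" "x n = \<Gamma> n #> (inv s \<otimes> \<gamma> n)"
    by (rule translated_XplusE)
  then have "act G s x n = \<gamma> n <# \<Gamma> n"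
    using assms(2) gamma_carrier[OF n(1)] unfolding act_def
    by (simp add: lcos_level_rcos level_lcos_eq_rcos m_assoc[symmetric])
  moreover have "act G s x \<in> X" using assms(3) unfolding Xminus_def by auto
  ultimately have "act G s x \<in> Xplus G \<Gamma> \<gamma>" using n(1) unfolding Xplus_def by auto
  then show False using assms(3) unfolding Xminus_def by auto
qed

lemma indep_set_imp_independent_translates:
  assumes "indep_set X (act G) (Xplus G \<Gamma> \<gamma>) (Xminus G \<Gamma> \<gamma>) M" "M \<subseteq> carrier G"
    "F \<subseteq> M" "finite F" "F \<noteq> {}"
  shows "independent_translates G \<Gamma> \<gamma> (m_inv G ` F)"
  unfolding independent_translates_def
proof
  fix \<omega> :: "'a \<Rightarrow> bool"
  obtain x where x: "\<And>s. s \<in> F \<Longrightarrow>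
      x \<in> X \<and> act G s x \<in> (if \<omega> (inv s) then Xplus G \<Gamma> \<gamma> else Xminus G \<Gamma> \<gamma>)"
    using assms(1)[unfolded indep_set_def, rule_format, of F "\<lambda>s. \<omega> (inv s)"] assms(3-5) by blast
  have "x \<in> X" using x assms(5) by blast
  moreover have "x \<in> aXplus (inv s) \<longleftrightarrow> \<omega> (inv s)" if "s \<in> F" for s
    using x[OF that] act_Xplus_imp_translated act_Xminus_imp_not_translated assms(2,3) that
    by (cases "\<omega> (inv s)") auto
  ultimately show "\<exists>x\<in>X. \<forall>a\<in>m_inv G ` F. x \<in> aXplus a \<longleftrightarrow> \<omega> a" by blast
qed

lemma indep_set_card_le_3:
  assumes "M \<subseteq> carrier G" "indep_set X (act G) (Xplus G \<Gamma> \<gamma>) (Xminus G \<Gamma> \<gamma>) M"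
  shows "finite M \<and> card M \<le> 3"
proof -
  have no_4_subset: "card F \<noteq> 4" if "F \<subseteq> M" "finite F" for F
  proof
    assume "card F = 4"
    moreover have "inj_on (m_inv G) F" using inv_inj assms(1) that(1) inj_on_subset by blast
    ultimately have "card (m_inv G ` F) = 4" by (simp add: card_image)
    moreover have "F \<noteq> {}" using \<open>card F = 4\<close> by auto
    then have "independent_translates G \<Gamma> \<gamma> (m_inv G ` F)"
      using indep_set_imp_independent_translates[OF assms(2,1) that] by blast
    moreover have "m_inv G ` F \<subseteq> carrier G" using assms(1) that(1) by auto
    ultimately show False using card_4_not_independent by blast
  qed
  have "finite M" using infinite_arbitrarily_large[of M 4] no_4_subset by blast
  moreover have "card M < 4" using obtain_subset_with_card_n[of 4 M] no_4_subset by force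
  ultimately show ?thesis by simp
qed

end

theorem lemma4p2:
  fixes G (structure) and \<Gamma> :: "nat \<Rightarrow> 'a set" and \<gamma> :: "nat \<Rightarrow> 'a" and M :: "'a set"
  assumes "group G"
    and "countable (carrier G)" and "infinite (carrier G)"
    and "residually_finite G"
    and "\<forall>n\<ge>1. \<Gamma> n \<lhd> G \<and> finite (rcosets (\<Gamma> n))"
    and "\<forall>n\<ge>1. \<Gamma> (Suc n) \<subset> \<Gamma> n"
    and "(\<Inter>n\<in>{1..}. \<Gamma> n) = {\<one>}"
    and "\<forall>n\<ge>2. \<gamma> n \<in> \<Gamma> (n - 1) - \<Gamma> n"
    and "M \<subseteq> carrier G"
    and "indep_set (invlim G \<Gamma>) (act G) (Xplus G \<Gamma> \<gamma>) (Xminus G \<Gamma> \<gamma>) M"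
  shows "finite M \<and> card M \<le> 5"
proof -
  interpret coset_tower G \<Gamma> \<gamma>
    by (intro coset_tower.intro coset_tower_axioms.intro assms(1)) (use assms(5-8) in auto)
  have "finite M \<and> card M \<le> 3" by (rule indep_set_card_le_3[OF assms(9,10)])
  then show ?thesis by simp
qed

end
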